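(* Let $\bm X\in\mathbb{IR}^n$ and let $(g^{\rm u},g^{\rm o})_{\bm X}$ be a superposition relaxation of $g:\bm X\to\mathbb{R}$ on $\bm X$ with continuous summands $g^{\rm u}_i,g^{\rm o}_i:X_i\to\mathbb{R}$. Let $\mathcal P^{\rm u}=\{i:\operatorname{wid}(g^{\rm u}_i(X_i))>0\}$ and $\mathcal P^{\rm o}=\{i:\operatorname{wid}(g^{\rm o}_i(X_i))>0\}$, and assume both are nonempty. Let $\varphi:Z\to\mathbb{R}$ be defined on an interval $Z\supseteq[\underline g^{\rm u}(\bm X),\overline g^{\rm o}(\bm X)]$, convex and monotonic. Set $\theta^{\rm u}_i=\operatorname{wid}(g^{\rm u}_i(X_i))/\operatorname{wid}(g^{\rm u}(\bm X))$ and $\theta^{\rm o}_i=\operatorname{wid}(g^{\rm o}_i(X_i))/\operatorname{wid}(g^{\rm o}(\bm X))$. Then a superposition relaxation $(f^{\rm u},f^{\rm o})_{\bm X}$ of $f=\varphi\circ g$ on $\bm X$ is given by the following summands (all summands not listed being identically zero): • if $\varphi$ is nondecreasing: $f^{\rm u}_i(x_i)=\varphi\big(g^{\rm u}_i(x_i)-\underline g^{\rm u}_i(X_i)+\underline g^{\rm u}(\bm X)\big)-(1-\theta^{\rm u}_i)\varphi\big(\underline g^{\rm u}(\bm X)\big)$ for $i\in\mathcal P^{\rm u}$, and $f^{\rm o}_i(x_i)=\theta^{\rm o}_i\varphi\Big(\frac{g^{\rm o}_i(x_i)-\overline g^{\rm o}_i(X_i)}{\theta^{\rm o}_i}+\overline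 g^{\rm o}(\bm X)\Big)$ for $i\in\mathcal P^{\rm o}$; • if $\varphi$ is nonincreasing: $f^{\rm u}_i(x_i)=\varphi\big(g^{\rm o}_i(x_i)-\overline g^{\rm o}_i(X_i)+\overline g^{\rm o}(\bm X)\big)-(1-\theta^{\rm o}_i)\varphi\big(\overline g^{\rm o}(\bm X)\big)$ for $i\in\mathcal P^{\rm o}$, and $f^{\rm o}_i(x_i)=\theta^{\rm u}_i\varphi\Big(\frac{g^{\rm u}_i(x_i)-\underline g^{\rm u}_i(X_i)}{\theta^{\rm u}_i}+\underline g^{\rm u}(\bm X)\Big)$ for $i\in\mathcal P^{\rm u}$.
   Context: $\mathbb{IR}^n$ is the set of boxes $\bm X=X_1\times\cdots\times X_n$ of compact intervals $X_i$. A superposition relaxation of $g:\bm X\to\mathbb{R}$ on $\bm X$, written $(g^{\rm u},g^{\rm o})_{\bm X}$, is a pair of separable functions $g^{\rm u}(\bm x)=\sum_i g^{\rm u}_i(x_i)$, $g^{\rm o}(\bm x)=\sum_i g^{\rm o}_i(x_i)$ with $g^{\rm u}_i,g^{\rm o}_i:X_i\to\mathbb{R}$ and $g^{\rm u}\le g\le g^{\rm o}$ on $\bm X$. Notation: $\underline g^{\rm u}_i(X_i)=\min_{x_i\in X_i}g^{\rm u}_i(x_i)$, $\overline g^{\rm u}_i(X_i)=\max_{x_i\in X_i}g^{\rm u}_i(x_i)$, $\operatorname{wid}(g^{\rm u}_i(X_i))=\overline g^{\rm u}_i(X_i)-\underline g^{\rm u}_i(X_i)$ (similarly for $g^{\rm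 o}_i$); $\underline g^{\rm u}(\bm X)=\sum_i\underline g^{\rm u}_i(X_i)$, $\overline g^{\rm u}(\bm X)=\sum_i\overline g^{\rm u}_i(X_i)$, $\operatorname{wid}(g^{\rm u}(\bm X))=\overline g^{\rm u}(\bm X)-\underline g^{\rm u}(\bm X)$, and likewise for $g^{\rm o}$. *)

theory Defs
  imports "HOL-Analysis.Analysis"
begin

definition box :: "nat \<Rightarrow> (nat \<Rightarrow> real) \<Rightarrow> (nat \<Rightarrow> real) \<Rightarrow> (nat \<Rightarrow> real) set" where
  "box n lo hi = PiE {..<n} (\<lambda>i. {lo i..hi i})"

definition superposition_relaxation ::
  "nat \<Rightarrow> (nat \<Rightarrow> real) \<Rightarrow> (nat \<Rightarrow> real) \<Rightarrow> ((nat \<Rightarrow> real) \<Rightarrow> real)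
   \<Rightarrow> (nat \<Rightarrow> real \<Rightarrow> real) \<Rightarrow> (nat \<Rightarrow> real \<Rightarrow> real) \<Rightarrow> bool" where
  "superposition_relaxation n lo hi h hu ho \<longleftrightarrow>
     (\<forall>x\<in>box n lo hi. (\<Sum>i<n. hu i (x i)) \<le> h x \<and> h x \<le> (\<Sum>i<n. ho i (x i)))"

definition imin :: "(real \<Rightarrow> real) \<Rightarrow> real \<Rightarrow> real \<Rightarrow> real" where
  "imin h a b = (INF t\<in>{a..b}. h t)"
definition imax :: "(real \<Rightarrow> real) \<Rightarrow> real \<Rightarrow> real \<Rightarrow> real" where
  "imax h a b = (SUP t\<in>{a..b}. h t)"
definition iwid :: "(real \<Rightarrow> real) \<Rightarrow> real \<Rightarrow> real \<Rightarrow> real" where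
  "iwid h a b = imax h a b - imin h a b"

definition smin :: "nat \<Rightarrow> (nat \<Rightarrow> real) \<Rightarrow> (nat \<Rightarrow> real) \<Rightarrow> (nat \<Rightarrow> real \<Rightarrow> real) \<Rightarrow> real" where
  "smin n lo hi h = (\<Sum>i<n. imin (h i) (lo i) (hi i))"
definition smax :: "nat \<Rightarrow> (nat \<Rightarrow> real) \<Rightarrow> (nat \<Rightarrow> real) \<Rightarrow> (nat \<Rightarrow> real \<Rightarrow> real) \<Rightarrow> real" where
  "smax n lo hi h = (\<Sum>i<n. imax (h i) (lo i) (hi i))"
definition swid :: "nat \<Rightarrow> (nat \<Rightarrow> real) \<Rightarrow> (nat \<Rightarrow> real) \<Rightarrow> (nat \<Rightarrow> real \<Rightarrow> real) \<Rightarrow> real" where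
  "swid n lo hi h = smax n lo hi h - smin n lo hi h"

definition theta :: "nat \<Rightarrow> (nat \<Rightarrow> real) \<Rightarrow> (nat \<Rightarrow> real) \<Rightarrow> (nat \<Rightarrow> real \<Rightarrow> real) \<Rightarrow> nat \<Rightarrow> real" where
  "theta n lo hi h i = iwid (h i) (lo i) (hi i) / swid n lo hi h"

end

theory Submission
  imports Defs
begin

text \<open>
  Fix \<open>x\<close> in the box and write \<open>\<Sum>i. g\<^sup>u\<^sub>i(x\<^sub>i) = L + \<Sum>i\<in>P\<^sup>u. a\<^sub>i\<close>, with \<open>L\<close>
  the minimum of \<open>g\<^sup>u\<close> over the box and all \<open>a\<^sub>i \<ge> 0\<close>. Convexity makes the increments of
  \<open>\<phi>\<close> superadditive for arguments of equal sign,
  \<open>\<phi>(L+A) + \<phi>(L+B) \<le> \<phi>(L) + \<phi>(L+A+B)\<close>; summing over \<open>P\<^sup>u\<close> and spreading \<open>\<phi>(L)\<close>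
  with the weights \<open>\<theta>\<^sup>u\<^sub>i\<close>, which sum to 1, gives the under-estimator of \<open>\<phi>(\<Sum>i. g\<^sup>u\<^sub>i(x\<^sub>i))\<close>.
  Writing \<open>\<Sum>i. g\<^sup>o\<^sub>i(x\<^sub>i) = \<Sum>i\<in>P\<^sup>o. \<theta>\<^sup>o\<^sub>i (a\<^sub>i/\<theta>\<^sup>o\<^sub>i + U)\<close>, with \<open>U\<close> the maximum
  of \<open>g\<^sup>o\<close> and all \<open>a\<^sub>i \<le> 0\<close>, Jensen's inequality gives the over-estimator of
  \<open>\<phi>(\<Sum>i. g\<^sup>o\<^sub>i(x\<^sub>i))\<close>. For nondecreasing \<open>\<phi>\<close> both bounds pass to \<open>\<phi> \<circ> g\<close>; the
  nonincreasing case is the nondecreasing one for \<open>y \<mapsto> \<phi>(-y)\<close>, \<open>-g\<close> and the relaxation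
  \<open>(-g\<^sup>o, -g\<^sup>u)\<close>.
\<close>

lemma convex_on_increments_superadditive:
  fixes \<phi> :: "real \<Rightarrow> real"
  assumes conv: "convex_on Z \<phi>" and L: "L \<in> Z" and LAB: "L + (A + B) \<in> Z"
    and same_sign: "0 \<le> A * B"
  shows "\<phi> (L + A) + \<phi> (L + B) \<le> \<phi> L + \<phi> (L + (A + B))"
proof (cases "A + B = 0")
  case True
  then have "0 \<le> - (A * A)"
    using same_sign by (simp add: add_eq_0_iff)
  then have "A = 0"
    by (auto simp: mult_le_0_iff)
  with True show ?thesis by simp
next
  case False
  \<comment> \<open>\<open>L + A\<close> and \<open>L + B\<close> are the convex combinations of \<open>L\<close> and \<open>L + (A + B)\<close>
      with weights \<open>t\<close> and \<open>1 - t\<close>, where \<open>t = A / (A + B)\<close>.\<close>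
  define t where "t = A / (A + B)"
  have "0 \<le> A * (A + B)" "0 \<le> B * (A + B)"
    using same_sign by (simp_all add: algebra_simps)
  then have t: "0 \<le> t" "t \<le> 1"
    using False by (auto simp: t_def zero_le_divide_iff divide_le_eq_1 zero_le_mult_iff)
  have tA: "t * (A + B) = A"
    using False by (simp add: t_def)
  have "(1 - t) *\<^sub>R L + t *\<^sub>R (L + (A + B)) = L + t * (A + B)"
    and "(1 - (1 - t)) *\<^sub>R L + (1 - t) *\<^sub>R (L + (A + B)) = L + (A + B) - t * (A + B)"
    by (simp_all add: algebra_simps)
  then have A: "L + A = (1 - t) *\<^sub>R L + t *\<^sub>R (L + (A + B))"
    and B: "L + B = (1 - (1 - t)) *\<^sub>R L + (1 - t) *\<^sub>R (L + (A + B))"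
    by (simp_all add: tA)
  show ?thesis
    using convex_onD[OF conv t L LAB] convex_onD[OF conv, of "1 - t", OF _ _ L LAB] t
    unfolding A [symmetric] B [symmetric] by (simp add: algebra_simps)
qed

lemma convex_on_sum_increments_le:
  fixes \<phi> :: "real \<Rightarrow> real"
  assumes conv: "convex_on Z \<phi>" and "finite S" and "\<forall>i\<in>S. 0 \<le> a i"
    and L: "L \<in> Z" and "L + sum a S \<in> Z"
  shows "(\<Sum>i\<in>S. \<phi> (L + a i) - \<phi> L) \<le> \<phi> (L + sum a S) - \<phi> L"
  using assms(2-)
proof (induction S rule: finite_induct)
  case empty
  then show ?case by simp
next
  case (insert j F)
  have "0 \<le> sum a F" "0 \<le> a j"
    using insert.prems(1) by (simp_all add: sum_nonneg)
  moreover have LjF: "L + (sum a F + a j) \<in> Z"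
    using insert.prems(3) insert.hyps by (simp add: add.commute)
  moreover have "is_interval Z"
    using convex_on_imp_convex[OF conv] by (simp add: is_interval_convex_1)
  ultimately have "L + sum a F \<in> Z"
    by (intro mem_is_interval_1_I[OF _ L LjF]) simp_all
  then have "(\<Sum>i\<in>F. \<phi> (L + a i) - \<phi> L) \<le> \<phi> (L + sum a F) - \<phi> L"
    using insert by simp
  moreover have "\<phi> (L + sum a F) + \<phi> (L + a j) \<le> \<phi> L + \<phi> (L + (sum a F + a j))"
    using \<open>0 \<le> sum a F\<close> \<open>0 \<le> a j\<close>
    by (intro convex_on_increments_superadditive[OF conv L LjF]) simp
  ultimately show ?case
    using insert.hyps by (simp add: algebra_simps)
qed

lemma convex_on_weighted_increments_le:
  fixes \<phi> :: "real \<Rightarrow> real"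
  assumes "convex_on Z \<phi>" and "finite S" and "sum \<theta> S = 1" and "\<forall>i\<in>S. 0 \<le> a i"
    and "L \<in> Z" and "L + sum a S \<in> Z"
  shows "(\<Sum>i\<in>S. \<phi> (L + a i) - (1 - \<theta> i) * \<phi> L) \<le> \<phi> (L + sum a S)"
proof -
  have "(\<Sum>i\<in>S. \<theta> i * \<phi> L) = \<phi> L"
    using \<open>sum \<theta> S = 1\<close> by (simp add: sum_distrib_right[symmetric])
  then have "(\<Sum>i\<in>S. \<phi> (L + a i) - (1 - \<theta> i) * \<phi> L) = (\<Sum>i\<in>S. \<phi> (L + a i) - \<phi> L) + \<phi> L"
    by (simp add: algebra_simps sum.distrib sum_subtractf)
  then show ?thesis
    using convex_on_sum_increments_le[OF assms(1,2,4-)] by simp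
qed

lemma convex_on_sum_rescaled_le:
  fixes \<phi> :: "real \<Rightarrow> real"
  assumes conv: "convex_on Z \<phi>" and "finite S" "S \<noteq> {}"
    and \<theta>: "sum \<theta> S = 1" "\<forall>i\<in>S. 0 < \<theta> i" and Z: "\<forall>i\<in>S. a i / \<theta> i + L \<in> Z"
  shows "\<phi> (L + sum a S) \<le> (\<Sum>i\<in>S. \<theta> i * \<phi> (a i / \<theta> i + L))"
proof -
  have "(\<Sum>i\<in>S. \<theta> i *\<^sub>R (a i / \<theta> i + L)) = (\<Sum>i\<in>S. a i + \<theta> i * L)"
    using \<theta>(2) by (intro sum.cong) (auto simp: field_simps)
  also have "\<dots> = L + sum a S"
    using \<theta>(1) by (simp add: sum.distrib sum_distrib_right[symmetric])
  finally show ?thesis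
    using convex_on_sum[OF \<open>finite S\<close> \<open>S \<noteq> {}\<close> conv \<theta>(1), of "\<lambda>i. a i / \<theta> i + L"] \<theta>(2) Z
    by (simp add: less_imp_le)
qed

lemma
  assumes "continuous_on {a..b} h" and "t \<in> {a..b}"
  shows imin_le: "imin h a b \<le> h t" and le_imax: "h t \<le> imax h a b"
proof -
  have "bounded (h ` {a..b})"
    using compact_continuous_image[OF assms(1) compact_Icc] by (rule compact_imp_bounded)
  then show "imin h a b \<le> h t" "h t \<le> imax h a b"
    unfolding imin_def imax_def using assms(2)
    by (auto intro: cINF_lower cSUP_upper bounded_imp_bdd_below bounded_imp_bdd_above)
qed

lemma imin_attained:
  assumes "a \<le> b" and "continuous_on {a..b} h"
  shows "\<exists>t\<in>{a..b}. h t = imin h a b"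
proof -
  obtain s where s: "s \<in> {a..b}" "\<forall>t\<in>{a..b}. h s \<le> h t"
    using continuous_attains_inf[OF compact_Icc _ assms(2)] assms(1) by auto
  then have "imin h a b = h s"
    unfolding imin_def by (intro cInf_eq_minimum) auto
  with s show ?thesis by auto
qed

lemma imax_attained:
  assumes "a \<le> b" and "continuous_on {a..b} h"
  shows "\<exists>t\<in>{a..b}. h t = imax h a b"
proof -
  obtain s where s: "s \<in> {a..b}" "\<forall>t\<in>{a..b}. h t \<le> h s"
    using continuous_attains_sup[OF compact_Icc _ assms(2)] assms(1) by auto
  then have "imax h a b = h s"
    unfolding imax_def by (intro cSup_eq_maximum) auto
  with s show ?thesis by auto
qed

lemma iwid_nonneg:
  assumes "a \<le> b" and "continuous_on {a..b} h"
  shows "0 \<le> iwid h a b"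
  using imin_le[OF assms(2), of a] le_imax[OF assms(2), of a] assms(1)
  unfolding iwid_def by simp

text \<open>
  For \<open>h = g\<^sup>u\<close> the set \<open>active n lo hi h\<close> is \<open>P\<^sup>u\<close>; \<open>lower_summand n lo hi g\<^sup>u \<phi>\<close> and
  \<open>upper_summand n lo hi g\<^sup>o \<phi>\<close> are the summands \<open>f\<^sup>u\<^sub>i\<close> and \<open>f\<^sup>o\<^sub>i\<close> of the nondecreasing case.
\<close>

definition active :: "nat \<Rightarrow> (nat \<Rightarrow> real) \<Rightarrow> (nat \<Rightarrow> real) \<Rightarrow> (nat \<Rightarrow> real \<Rightarrow> real) \<Rightarrow> nat set"
  where "active n lo hi h = {i\<in>{..<n}. 0 < iwid (h i) (lo i) (hi i)}"

definition lower_summand ::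
  "nat \<Rightarrow> (nat \<Rightarrow> real) \<Rightarrow> (nat \<Rightarrow> real) \<Rightarrow> (nat \<Rightarrow> real \<Rightarrow> real) \<Rightarrow> (real \<Rightarrow> real) \<Rightarrow> nat \<Rightarrow> real \<Rightarrow> real"
  where "lower_summand n lo hi h \<phi> i t =
    (if 0 < iwid (h i) (lo i) (hi i)
     then \<phi> (h i t - imin (h i) (lo i) (hi i) + smin n lo hi h) - (1 - theta n lo hi h i) * \<phi> (smin n lo hi h)
     else 0)"

definition upper_summand ::
  "nat \<Rightarrow> (nat \<Rightarrow> real) \<Rightarrow> (nat \<Rightarrow> real) \<Rightarrow> (nat \<Rightarrow> real \<Rightarrow> real) \<Rightarrow> (real \<Rightarrow> real) \<Rightarrow> nat \<Rightarrow> real \<Rightarrow> real"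
  where "upper_summand n lo hi h \<phi> i t =
    (if 0 < iwid (h i) (lo i) (hi i)
     then theta n lo hi h i * \<phi> ((h i t - imax (h i) (lo i) (hi i)) / theta n lo hi h i + smax n lo hi h)
     else 0)"

lemma sum_if_iwid_pos_eq_sum_active:
  "(\<Sum>i<n. if 0 < iwid (h i) (lo i) (hi i) then F i else 0) = (\<Sum>i\<in>active n lo hi h. F i)"
  unfolding active_def by (rule sum.inter_filter[symmetric]) simp

lemma box_restrict_mem: "(\<And>i. i < n \<Longrightarrow> x i \<in> {lo i..hi i}) \<Longrightarrow> restrict x {..<n} \<in> box n lo hi"
  unfolding box_def by (simp add: PiE_iff)

locale continuous_summands =
  fixes n :: nat and lo hi :: "nat \<Rightarrow> real" and h :: "nat \<Rightarrow> real \<Rightarrow> real"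
  assumes lo_le_hi: "i < n \<Longrightarrow> lo i \<le> hi i"
    and continuous_on_summand: "i < n \<Longrightarrow> continuous_on {lo i..hi i} (h i)"
begin

lemma summand_bounds:
  assumes "x \<in> box n lo hi" and "i < n"
  shows "imin (h i) (lo i) (hi i) \<le> h i (x i)" and "h i (x i) \<le> imax (h i) (lo i) (hi i)"
  using assms continuous_on_summand imin_le le_imax unfolding box_def by (fastforce simp: PiE_iff)+

lemma sum_bounds:
  assumes "x \<in> box n lo hi"
  shows "smin n lo hi h \<le> (\<Sum>i<n. h i (x i))" and "(\<Sum>i<n. h i (x i)) \<le> smax n lo hi h"
  unfolding smin_def smax_def using summand_bounds[OF assms] by (auto intro: sum_mono)

lemma smin_attained: "\<exists>x\<in>box n lo hi. (\<Sum>i<n. h i (x i)) = smin n lo hi h"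
proof -
  obtain t where t: "\<And>i. i < n \<Longrightarrow> t i \<in> {lo i..hi i} \<and> h i (t i) = imin (h i) (lo i) (hi i)"
    using imin_attained[OF lo_le_hi continuous_on_summand] by metis
  then show ?thesis
    by (intro bexI[OF _ box_restrict_mem[of n t]]) (auto simp: smin_def)
qed

lemma smax_attained: "\<exists>x\<in>box n lo hi. (\<Sum>i<n. h i (x i)) = smax n lo hi h"
proof -
  obtain t where t: "\<And>i. i < n \<Longrightarrow> t i \<in> {lo i..hi i} \<and> h i (t i) = imax (h i) (lo i) (hi i)"
    using imax_attained[OF lo_le_hi continuous_on_summand] by metis
  then show ?thesis
    by (intro bexI[OF _ box_restrict_mem[of n t]]) (auto simp: smax_def)
qed

lemma swid_eq_sum_active: "swid n lo hi h = (\<Sum>i\<in>active n lo hi h. iwid (h i) (lo i) (hi i))"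
proof -
  have "swid n lo hi h = (\<Sum>i<n. iwid (h i) (lo i) (hi i))"
    unfolding swid_def smax_def smin_def iwid_def by (simp add: sum_subtractf)
  also have "\<dots> = (\<Sum>i\<in>active n lo hi h. iwid (h i) (lo i) (hi i))"
    using iwid_nonneg[OF lo_le_hi continuous_on_summand]
    by (intro sum.mono_neutral_right) (auto simp: active_def not_less intro: order_antisym)
  finally show ?thesis .
qed

lemma swid_pos: "active n lo hi h \<noteq> {} \<Longrightarrow> 0 < swid n lo hi h"
  unfolding swid_eq_sum_active by (intro sum_pos) (auto simp: active_def)

lemma theta_pos:
  assumes "i \<in> active n lo hi h"
  shows "0 < theta n lo hi h i"
  using assms swid_pos unfolding theta_def by (auto simp: active_def intro!: divide_pos_pos)

lemma sum_theta_active: "active n lo hi h \<noteq> {} \<Longrightarrow> (\<Sum>i\<in>active n lo hi h. theta n lo hi h i) = 1"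
  using swid_pos unfolding theta_def by (simp add: sum_divide_distrib[symmetric] swid_eq_sum_active)

lemma summand_const_if_inactive:
  assumes "x \<in> box n lo hi" and "i \<in> {..<n} - active n lo hi h"
  shows "h i (x i) = imin (h i) (lo i) (hi i)" and "h i (x i) = imax (h i) (lo i) (hi i)"
  using assms summand_bounds[OF assms(1)] unfolding active_def iwid_def by force+

lemma sum_eq_smin_plus_active:
  assumes "x \<in> box n lo hi"
  shows "(\<Sum>i<n. h i (x i)) = smin n lo hi h + (\<Sum>i\<in>active n lo hi h. h i (x i) - imin (h i) (lo i) (hi i))"
proof -
  have "(\<Sum>i<n. h i (x i)) - smin n lo hi h = (\<Sum>i<n. h i (x i) - imin (h i) (lo i) (hi i))"
    unfolding smin_def by (simp add: sum_subtractf)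
  also have "\<dots> = (\<Sum>i\<in>active n lo hi h. h i (x i) - imin (h i) (lo i) (hi i))"
    using summand_const_if_inactive[OF assms] by (intro sum.mono_neutral_right) (auto simp: active_def)
  finally show ?thesis by simp
qed

lemma sum_eq_smax_plus_active:
  assumes "x \<in> box n lo hi"
  shows "(\<Sum>i<n. h i (x i)) = smax n lo hi h + (\<Sum>i\<in>active n lo hi h. h i (x i) - imax (h i) (lo i) (hi i))"
proof -
  have "(\<Sum>i<n. h i (x i)) - smax n lo hi h = (\<Sum>i<n. h i (x i) - imax (h i) (lo i) (hi i))"
    unfolding smax_def by (simp add: sum_subtractf)
  also have "\<dots> = (\<Sum>i\<in>active n lo hi h. h i (x i) - imax (h i) (lo i) (hi i))"
    using summand_const_if_inactive[OF assms] by (intro sum.mono_neutral_right) (auto simp: active_def)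
  finally show ?thesis by simp
qed

lemma sum_lower_summand_le:
  fixes \<phi> :: "real \<Rightarrow> real"
  assumes conv: "convex_on {smin n lo hi h..smax n lo hi h} \<phi>"
    and ne: "active n lo hi h \<noteq> {}" and x: "x \<in> box n lo hi"
  shows "(\<Sum>i<n. lower_summand n lo hi h \<phi> i (x i)) \<le> \<phi> (\<Sum>i<n. h i (x i))"
proof -
  define a where "a i = h i (x i) - imin (h i) (lo i) (hi i)" for i
  have nonneg: "\<forall>i\<in>active n lo hi h. 0 \<le> a i"
    using summand_bounds(1)[OF x] by (auto simp: a_def active_def)
  have sum: "(\<Sum>i<n. h i (x i)) = smin n lo hi h + sum a (active n lo hi h)"
    using sum_eq_smin_plus_active[OF x] by (simp add: a_def)
  have "smin n lo hi h \<in> {smin n lo hi h..smax n lo hi h}"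
    and "smin n lo hi h + sum a (active n lo hi h) \<in> {smin n lo hi h..smax n lo hi h}"
    using sum_bounds[OF x] unfolding sum by auto
  from convex_on_weighted_increments_le[OF conv _ sum_theta_active[OF ne] nonneg this]
  show ?thesis
    unfolding lower_summand_def sum_if_iwid_pos_eq_sum_active sum by (simp add: a_def ac_simps active_def)
qed

lemma le_sum_upper_summand:
  fixes \<phi> :: "real \<Rightarrow> real"
  assumes conv: "convex_on {smin n lo hi h..smax n lo hi h} \<phi>"
    and ne: "active n lo hi h \<noteq> {}" and x: "x \<in> box n lo hi"
  shows "\<phi> (\<Sum>i<n. h i (x i)) \<le> (\<Sum>i<n. upper_summand n lo hi h \<phi> i (x i))"
proof -
  define a where "a i = h i (x i) - imax (h i) (lo i) (hi i)" for i
  have "a i / theta n lo hi h i + smax n lo hi h \<in> {smin n lo hi h..smax n lo hi h}"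
    if i: "i \<in> active n lo hi h" for i
  proof -
    have w: "0 < iwid (h i) (lo i) (hi i)" and "i < n"
      using i by (auto simp: active_def)
    have "- iwid (h i) (lo i) (hi i) \<le> a i" "a i \<le> 0"
      using summand_bounds[OF x \<open>i < n\<close>] by (auto simp: a_def iwid_def)
    then have "- swid n lo hi h \<le> a i / theta n lo hi h i" "a i / theta n lo hi h i \<le> 0"
      using w swid_pos[OF ne] mult_right_mono[of "- iwid (h i) (lo i) (hi i)" "a i" "swid n lo hi h"]
      by (auto simp: theta_def le_divide_eq divide_le_0_iff mult_nonpos_nonneg mult.commute)
    then show ?thesis
      unfolding swid_def by simp
  qed
  moreover have "(\<Sum>i<n. h i (x i)) = smax n lo hi h + sum a (active n lo hi h)"
    using sum_eq_smax_plus_active[OF x] by (simp add: a_def)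
  ultimately show ?thesis
    using convex_on_sum_rescaled_le[OF conv _ ne sum_theta_active[OF ne], of a "smax n lo hi h"] theta_pos
    unfolding upper_summand_def sum_if_iwid_pos_eq_sum_active by (simp add: a_def active_def)
qed

end

lemma imin_uminus: "imin (\<lambda>t. - h t) a b = - imax h a b"
  unfolding imin_def imax_def Inf_real_def by (simp add: image_image)

lemma imax_uminus: "imax (\<lambda>t. - h t) a b = - imin h a b"
  unfolding imin_def imax_def Inf_real_def by (simp add: image_image)

lemma iwid_uminus: "iwid (\<lambda>t. - h t) a b = iwid h a b"
  unfolding iwid_def imin_uminus imax_uminus by simp

lemma smin_uminus: "smin n lo hi (\<lambda>i t. - h i t) = - smax n lo hi h"
  unfolding smin_def smax_def imin_uminus by (simp add: sum_negf)

lemma smax_uminus: "smax n lo hi (\<lambda>i t. - h i t) = - smin n lo hi h"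
  unfolding smin_def smax_def imax_uminus by (simp add: sum_negf)

lemma theta_uminus: "theta n lo hi (\<lambda>i t. - h i t) = theta n lo hi h"
  unfolding theta_def swid_def smin_uminus smax_uminus iwid_uminus by (simp add: fun_eq_iff)

lemma lower_summand_reflect:
  "lower_summand n lo hi (\<lambda>i t. - h i t) (\<lambda>y. \<phi> (- y)) =
    (\<lambda>i t. if 0 < iwid (h i) (lo i) (hi i)
           then \<phi> (h i t - imax (h i) (lo i) (hi i) + smax n lo hi h) - (1 - theta n lo hi h i) * \<phi> (smax n lo hi h)
           else 0)"
  by (simp add: fun_eq_iff lower_summand_def imin_uminus iwid_uminus smin_uminus theta_uminus algebra_simps)

lemma upper_summand_reflect:
  "upper_summand n lo hi (\<lambda>i t. - h i t) (\<lambda>y. \<phi> (- y)) =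
    (\<lambda>i t. if 0 < iwid (h i) (lo i) (hi i)
           then theta n lo hi h i * \<phi> ((h i t - imin (h i) (lo i) (hi i)) / theta n lo hi h i + smin n lo hi h)
           else 0)"
  by (simp add: fun_eq_iff upper_summand_def imax_uminus iwid_uminus smax_uminus theta_uminus algebra_simps diff_divide_distrib)

lemma active_uminus: "active n lo hi (\<lambda>i t. - h i t) = active n lo hi h"
  by (simp add: active_def iwid_uminus)

lemma continuous_summands_uminus:
  assumes "continuous_summands n lo hi h"
  shows "continuous_summands n lo hi (\<lambda>i t. - h i t)"
  using assms by (simp add: continuous_summands_def continuous_on_minus)

lemma superposition_relaxation_uminus:
  assumes "superposition_relaxation n lo hi g gu go"
  shows "superposition_relaxation n lo hi (\<lambda>x. - g x) (\<lambda>i t. - go i t) (\<lambda>i t. - gu i t)"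
  using assms unfolding superposition_relaxation_def by (simp add: sum_negf)

lemma convex_on_reflect:
  fixes f :: "real \<Rightarrow> real"
  assumes "convex_on {a..b} f"
  shows "convex_on {-b..-a} (\<lambda>y. f (- y))"
proof (rule convex_onI)
  fix t x y :: real
  assume "0 < t" "t < 1" "x \<in> {-b..-a}" "y \<in> {-b..-a}"
  then have "f ((1 - t) *\<^sub>R (- x) + t *\<^sub>R (- y)) \<le> (1 - t) * f (- x) + t * f (- y)"
    by (intro convex_onD[OF assms]) auto
  then show "f (- ((1 - t) *\<^sub>R x + t *\<^sub>R y)) \<le> (1 - t) * f (- x) + t * f (- y)"
    by (simp add: algebra_simps)
qed simp

lemma antimono_on_reflect:
  fixes f :: "real \<Rightarrow> real"
  assumes "antimono_on {a..b} f"
  shows "mono_on {-b..-a} (\<lambda>y. f (- y))"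
  by (intro mono_onI monotone_onD[OF assms]) auto

lemma superposition_relaxation_smin_smax_le:
  assumes relax: "superposition_relaxation n lo hi g gu go"
    and U: "continuous_summands n lo hi gu" and O: "continuous_summands n lo hi go"
  shows "smin n lo hi gu \<le> smin n lo hi go" and "smax n lo hi gu \<le> smax n lo hi go"
proof -
  obtain x where x: "x \<in> box n lo hi" "(\<Sum>i<n. go i (x i)) = smin n lo hi go"
    using continuous_summands.smin_attained[OF O] by blast
  then show "smin n lo hi gu \<le> smin n lo hi go"
    using continuous_summands.sum_bounds(1)[OF U x(1)] relax
    unfolding superposition_relaxation_def by force
next
  obtain x where x: "x \<in> box n lo hi" "(\<Sum>i<n. gu i (x i)) = smax n lo hi gu"
    using continuous_summands.smax_attained[OF U] by blast
  then show "smax n lo hi gu \<le> smax n lo hi go"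
    using continuous_summands.sum_bounds(2)[OF O x(1)] relax
    unfolding superposition_relaxation_def by force
qed

lemma superposition_relaxation_mono_convex_comp:
  fixes \<phi> :: "real \<Rightarrow> real"
  assumes relax: "superposition_relaxation n lo hi g gu go"
    and U: "continuous_summands n lo hi gu" and O: "continuous_summands n lo hi go"
    and U_ne: "active n lo hi gu \<noteq> {}" and O_ne: "active n lo hi go \<noteq> {}"
    and conv: "convex_on {smin n lo hi gu..smax n lo hi go} \<phi>"
    and mono: "mono_on {smin n lo hi gu..smax n lo hi go} \<phi>"
  shows "superposition_relaxation n lo hi (\<phi> \<circ> g) (lower_summand n lo hi gu \<phi>) (upper_summand n lo hi go \<phi>)"
  unfolding superposition_relaxation_def
proof (intro ballI conjI)
  fix x
  assume x: "x \<in> box n lo hi"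
  note sum_le = superposition_relaxation_smin_smax_le[OF relax U O]
  have g: "(\<Sum>i<n. gu i (x i)) \<le> g x" "g x \<le> (\<Sum>i<n. go i (x i))"
    using relax x unfolding superposition_relaxation_def by auto
  have "convex_on {smin n lo hi gu..smax n lo hi gu} \<phi>" "convex_on {smin n lo hi go..smax n lo hi go} \<phi>"
    using sum_le by (auto intro: convex_on_subset[OF conv])
  note lower = continuous_summands.sum_lower_summand_le[OF U this(1) U_ne x]
    and upper = continuous_summands.le_sum_upper_summand[OF O this(2) O_ne x]
  have "\<phi> (\<Sum>i<n. gu i (x i)) \<le> \<phi> (g x)" "\<phi> (g x) \<le> \<phi> (\<Sum>i<n. go i (x i))"
    using g sum_le continuous_summands.sum_bounds[OF U x] continuous_summands.sum_bounds[OF O x]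
    by (auto intro!: mono_onD[OF mono])
  with lower upper
  show "(\<Sum>i<n. lower_summand n lo hi gu \<phi> i (x i)) \<le> (\<phi> \<circ> g) x"
    and "(\<phi> \<circ> g) x \<le> (\<Sum>i<n. upper_summand n lo hi go \<phi> i (x i))"
    by simp_all
qed

lemma superposition_relaxation_antimono_convex_comp:
  fixes \<phi> :: "real \<Rightarrow> real"
  assumes relax: "superposition_relaxation n lo hi g gu go"
    and U: "continuous_summands n lo hi gu" and O: "continuous_summands n lo hi go"
    and U_ne: "active n lo hi gu \<noteq> {}" and O_ne: "active n lo hi go \<noteq> {}"
    and conv: "convex_on {smin n lo hi gu..smax n lo hi go} \<phi>"
    and antimono: "antimono_on {smin n lo hi gu..smax n lo hi go} \<phi>"
  shows "superposition_relaxation n lo hi (\<phi> \<circ> g)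
           (lower_summand n lo hi (\<lambda>i t. - go i t) (\<lambda>y. \<phi> (- y)))
           (upper_summand n lo hi (\<lambda>i t. - gu i t) (\<lambda>y. \<phi> (- y)))"
proof -
  have "convex_on {smin n lo hi (\<lambda>i t. - go i t)..smax n lo hi (\<lambda>i t. - gu i t)} (\<lambda>y. \<phi> (- y))"
    and "mono_on {smin n lo hi (\<lambda>i t. - go i t)..smax n lo hi (\<lambda>i t. - gu i t)} (\<lambda>y. \<phi> (- y))"
    unfolding smin_uminus smax_uminus
    by (rule convex_on_reflect[OF conv], rule antimono_on_reflect[OF antimono])
  from superposition_relaxation_mono_convex_comp[OF superposition_relaxation_uminus[OF relax]
      continuous_summands_uminus[OF O] continuous_summands_uminus[OF U]
      _ _ this, unfolded active_uminus, OF O_ne U_ne]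
  show ?thesis
    by (simp add: comp_def)
qed

theorem theorem1:
  fixes n :: nat and lo hi :: "nat \<Rightarrow> real" and g :: "(nat \<Rightarrow> real) \<Rightarrow> real"
    and gu go :: "nat \<Rightarrow> real \<Rightarrow> real" and \<phi> :: "real \<Rightarrow> real" and Z :: "real set"
  assumes box_ok: "\<forall>i<n. lo i \<le> hi i"
    and relax: "superposition_relaxation n lo hi g gu go"
    and cont: "\<forall>i<n. continuous_on {lo i..hi i} (gu i) \<and> continuous_on {lo i..hi i} (go i)"
    and Pu_ne: "\<exists>i<n. iwid (gu i) (lo i) (hi i) > 0"
    and Po_ne: "\<exists>i<n. iwid (go i) (lo i) (hi i) > 0"
    and Z_int: "is_interval Z"
    and Z_sup: "{smin n lo hi gu .. smax n lo hi go} \<subseteq> Z"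
    and conv: "convex_on Z \<phi>"
    and monot: "mono_on Z \<phi> \<or> antimono_on Z \<phi>"
  shows
    "(mono_on Z \<phi> \<longrightarrow>
       superposition_relaxation n lo hi (\<phi> \<circ> g)
         (\<lambda>i t. if iwid (gu i) (lo i) (hi i) > 0
                then \<phi> (gu i t - imin (gu i) (lo i) (hi i) + smin n lo hi gu)
                     - (1 - theta n lo hi gu i) * \<phi> (smin n lo hi gu)
                else 0)
         (\<lambda>i t. if iwid (go i) (lo i) (hi i) > 0
                then theta n lo hi go i *
                     \<phi> ((go i t - imax (go i) (lo i) (hi i)) / theta n lo hi go i + smax n lo hi go)
                else 0))
   \<and> (antimono_on Z \<phi> \<longrightarrow>
       superposition_relaxation n lo hi (\<phi> \<circ> g)
         (\<lambda>i t. if iwid (go i) (lo i) (hi i) > 0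
                then \<phi> (go i t - imax (go i) (lo i) (hi i) + smax n lo hi go)
                     - (1 - theta n lo hi go i) * \<phi> (smax n lo hi go)
                else 0)
         (\<lambda>i t. if iwid (gu i) (lo i) (hi i) > 0
                then theta n lo hi gu i *
                     \<phi> ((gu i t - imin (gu i) (lo i) (hi i)) / theta n lo hi gu i + smin n lo hi gu)
                else 0))"
proof -
  have U: "continuous_summands n lo hi gu" and O: "continuous_summands n lo hi go"
    using box_ok cont by (simp_all add: continuous_summands_def)
  have U_ne: "active n lo hi gu \<noteq> {}" and O_ne: "active n lo hi go \<noteq> {}"
    using Pu_ne Po_ne by (auto simp: active_def)
  have conv': "convex_on {smin n lo hi gu..smax n lo hi go} \<phi>"
    using convex_on_subset[OF conv Z_sup] by simp
  note mono_case = superposition_relaxation_mono_convex_comp[OF relax U O U_ne O_ne conv']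
    and antimono_case = superposition_relaxation_antimono_convex_comp[OF relax U O U_ne O_ne conv']
  show ?thesis
    using mono_case[OF mono_on_subset[OF _ Z_sup]] antimono_case[OF monotone_on_subset[OF _ Z_sup]]
    unfolding lower_summand_reflect upper_summand_reflect
    unfolding lower_summand_def[abs_def] upper_summand_def[abs_def] by simp
qed

end
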